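(* Let $(G,R)$ be a multirooted graph, let $c$ be a domain preserving partial colouring of $(G,R)$, and let $\Gamma$ be the stabiliser of $c$ in $\mathrm{Aut}(G,R)$. Let $A$ and $B$ be moving tuples (with respect to $c$), each with at most $3$ elements. If $A$ has an uncommon neighbour in $B$, then $B$ has an uncommon neighbour in $A$, and there is a bijection $f\colon A\to B$ such that for every $\gamma\in\Gamma$ we have $\gamma|_B = f\circ\gamma|_A\circ f^{-1}$. In particular, every $\gamma\in\Gamma$ that fixes a vertex $v\in A$ also fixes $f(v)\in B$, and vice versa.
   Context: All graphs are simple, connected and locally finite. A multirooted graph $(G,R)$ is a graph $G=(V,E)$ together with a set $R\subseteq V$ of roots; $\mathrm{Aut}(G,R)$ is the group of automorphisms of $G$ fixing every vertex of $R$. A partial colouring is a function $c$ from a set $\mathrm{dom}(c)\subseteq V$ to a set of colours. An automorphism $\gamma$ preserves $c$ if $c(v)=c(\gamma v)$ whenever both are defined; the stabiliser of $c$ is the set of $c$-preserving automorphisms in $\mathrm{Aut}(G,R)$. The colouring $c$ is domain preserving if every $c$-preserving automorphism of $(G,R)$ maps $\mathrm{dom}(c)$ onto itself (in this case the stabiliser is a group). For a domain preserving $c$: a vertex $v\in V\setminus R$ is charted if it is coloured or has a neighbour in $R$; a moving tuple is an orbit of a charted vertex under the stabiliser of $c$. A vertex $w\notin R$ is an uncommon neighbour of a moving tuple $A$ if $w$ is adjacent to some but not all members of $A$. *)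

theory Defs
  imports Main
begin

definition simple_graph :: "'a set \<Rightarrow> ('a \<Rightarrow> 'a \<Rightarrow> bool) \<Rightarrow> bool" where
  "simple_graph V E \<longleftrightarrow>
     (\<forall>u v. E u v \<longrightarrow> u \<in> V \<and> v \<in> V) \<and>
     (\<forall>u v. E u v \<longrightarrow> E v u) \<and>
     (\<forall>v. \<not> E v v)"

definition connected_graph :: "'a set \<Rightarrow> ('a \<Rightarrow> 'a \<Rightarrow> bool) \<Rightarrow> bool" where
  "connected_graph V E \<longleftrightarrow> (\<forall>u\<in>V. \<forall>v\<in>V. E\<^sup>*\<^sup>* u v)"

definition locally_finite :: "'a set \<Rightarrow> ('a \<Rightarrow> 'a \<Rightarrow> bool) \<Rightarrow> bool" where
  "locally_finite V E \<longleftrightarrow> (\<forall>v\<in>V. finite {w. E v w})"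

definition multirooted_graph :: "'a set \<Rightarrow> ('a \<Rightarrow> 'a \<Rightarrow> bool) \<Rightarrow> 'a set \<Rightarrow> bool" where
  "multirooted_graph V E R \<longleftrightarrow>
     simple_graph V E \<and> connected_graph V E \<and> locally_finite V E \<and> R \<subseteq> V"

text \<open>Aut(G,R): automorphisms of G fixing every root (identity outside V, for canonicity).\<close>
definition aut :: "'a set \<Rightarrow> ('a \<Rightarrow> 'a \<Rightarrow> bool) \<Rightarrow> 'a set \<Rightarrow> ('a \<Rightarrow> 'a) set" where
  "aut V E R = {\<gamma>. bij_betw \<gamma> V V \<and>
                   (\<forall>u\<in>V. \<forall>v\<in>V. E u v \<longleftrightarrow> E (\<gamma> u) (\<gamma> v)) \<and>
                   (\<forall>r\<in>R. \<gamma> r = r) \<and>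
                   (\<forall>x. x \<notin> V \<longrightarrow> \<gamma> x = x)}"

definition partial_colouring :: "'a set \<Rightarrow> ('a \<Rightarrow> 'c option) \<Rightarrow> bool" where
  "partial_colouring V c \<longleftrightarrow> dom c \<subseteq> V"

definition preserves :: "('a \<Rightarrow> 'a) \<Rightarrow> ('a \<Rightarrow> 'c option) \<Rightarrow> bool" where
  "preserves \<gamma> c \<longleftrightarrow> (\<forall>v. v \<in> dom c \<and> \<gamma> v \<in> dom c \<longrightarrow> c v = c (\<gamma> v))"

definition stab :: "'a set \<Rightarrow> ('a \<Rightarrow> 'a \<Rightarrow> bool) \<Rightarrow> 'a set \<Rightarrow> ('a \<Rightarrow> 'c option) \<Rightarrow> ('a \<Rightarrow> 'a) set" where
  "stab V E R c = {\<gamma> \<in> aut V E R. preserves \<gamma> c}"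

definition domain_preserving :: "'a set \<Rightarrow> ('a \<Rightarrow> 'a \<Rightarrow> bool) \<Rightarrow> 'a set \<Rightarrow> ('a \<Rightarrow> 'c option) \<Rightarrow> bool" where
  "domain_preserving V E R c \<longleftrightarrow> (\<forall>\<gamma> \<in> stab V E R c. \<gamma> ` dom c = dom c)"

definition charted :: "'a set \<Rightarrow> ('a \<Rightarrow> 'a \<Rightarrow> bool) \<Rightarrow> 'a set \<Rightarrow> ('a \<Rightarrow> 'c option) \<Rightarrow> 'a \<Rightarrow> bool" where
  "charted V E R c v \<longleftrightarrow> v \<in> V - R \<and> (v \<in> dom c \<or> (\<exists>r\<in>R. E v r))"

definition moving_tuple :: "'a set \<Rightarrow> ('a \<Rightarrow> 'a \<Rightarrow> bool) \<Rightarrow> 'a set \<Rightarrow> ('a \<Rightarrow> 'c option) \<Rightarrow> 'a set \<Rightarrow> bool" where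
  "moving_tuple V E R c A \<longleftrightarrow>
     (\<exists>v. charted V E R c v \<and> A = (\<lambda>\<gamma>. \<gamma> v) ` stab V E R c)"

definition uncommon_neighbour :: "'a set \<Rightarrow> ('a \<Rightarrow> 'a \<Rightarrow> bool) \<Rightarrow> 'a set \<Rightarrow> 'a set \<Rightarrow> 'a \<Rightarrow> bool" where
  "uncommon_neighbour V E R A w \<longleftrightarrow>
     w \<in> V \<and> w \<notin> R \<and> (\<exists>a\<in>A. E w a) \<and> \<not> (\<forall>a\<in>A. E w a)"

end

theory Submission
  imports Defs
begin

text \<open>The stabiliser \<open>\<Gamma>\<close> acts transitively on each of the moving tuples \<open>A\<close> and \<open>B\<close> and
  preserves adjacency, so the edges between \<open>A\<close> and \<open>B\<close> form a biregular bipartite graph: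
  every vertex of \<open>A\<close> has \<open>k\<^sub>A\<close> neighbours in \<open>B\<close>, every vertex of \<open>B\<close> has \<open>k\<^sub>B\<close> in \<open>A\<close>,
  and \<open>|A| k\<^sub>A = |B| k\<^sub>B\<close>. An uncommon neighbour in \<open>B\<close> forces \<open>0 < k\<^sub>B < |A|\<close> and
  \<open>0 < k\<^sub>A < |B|\<close>; as both tuples have at most three elements this leaves only
  \<open>|A| = |B|\<close> and \<open>k\<^sub>A = k\<^sub>B \<in> {1, |B| - 1}\<close>. Then either the edges or the non-edges between
  \<open>A\<close> and \<open>B\<close> form a perfect matching, which is \<open>\<Gamma>\<close>-invariant and hence the required
  equivariant bijection.\<close>

lemma sum_card_filter_swap:
  assumes "finite A" "finite B"
  shows "(\<Sum>a\<in>A. card {b\<in>B. P a b}) = (\<Sum>b\<in>B. card {a\<in>A. P a b})"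
proof -
  have "card {b\<in>B. P a b} = (\<Sum>b\<in>B. of_bool (P a b))" for a
    using assms(2) by (simp add: Collect_conj_eq Int_def[symmetric] Int_commute)
  moreover have "card {a\<in>A. P a b} = (\<Sum>a\<in>A. of_bool (P a b))" for b
    using assms(1) by (simp add: Collect_conj_eq Int_def[symmetric] Int_commute)
  ultimately show ?thesis by (simp add: sum.swap[of _ A])
qed

lemma biregular_degrees_le_3:
  fixes m n k l :: nat
  assumes "m * k = n * l" "0 < k" "k < n" "0 < l" "l < m" "m \<le> 3" "n \<le> 3"
  shows "m = n \<and> k = l \<and> (k = 1 \<or> k + 1 = n)"
proof -
  have "m \<in> {2, 3}" "n \<in> {2, 3}" "k \<in> {1, 2}" "l \<in> {1, 2}"
    using assms by auto
  then show ?thesis using assms(1,3,5) by auto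
qed

lemma bij_betw_of_unique_partners:
  assumes "\<And>a. a \<in> A \<Longrightarrow> card {b\<in>B. Q a b} = 1"
    and "\<And>b. b \<in> B \<Longrightarrow> card {a\<in>A. Q a b} = 1"
  obtains f where "bij_betw f A B" "\<And>a b. a \<in> A \<Longrightarrow> b \<in> B \<Longrightarrow> Q a b \<longleftrightarrow> b = f a"
proof -
  have ex1: "\<exists>!x. x \<in> X \<and> P x" if card_1: "card {x\<in>X. P x} = 1" for X and P :: "'c \<Rightarrow> bool"
  proof -
    obtain x where "{x\<in>X. P x} = {x}" using card_1_singletonE[OF card_1] by blast
    then show ?thesis by (metis (mono_tags, lifting) mem_Collect_eq singletonD singletonI)
  qed
  define f where "f a = (THE b. b \<in> B \<and> Q a b)" for a
  have f_into: "f a \<in> B" "Q a (f a)" if "a \<in> A" for a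
    using theI'[OF ex1[OF assms(1)[OF that]]] unfolding f_def by blast+
  have partner: "Q a b \<longleftrightarrow> b = f a" if "a \<in> A" "b \<in> B" for a b
    using ex1[OF assms(1)[OF that(1)]] f_into[OF that(1)] that(2) by blast
  have "inj_on f A"
  proof (rule inj_onI)
    fix a a' assume "a \<in> A" "a' \<in> A" "f a = f a'"
    then have "Q a (f a)" "Q a' (f a)" "f a \<in> B" using f_into by metis+
    then show "a = a'" using ex1[OF assms(2)] \<open>a \<in> A\<close> \<open>a' \<in> A\<close> by blast
  qed
  moreover have "f ` A = B"
  proof
    show "f ` A \<subseteq> B" using f_into by blast
    show "B \<subseteq> f ` A"
    proof
      fix b assume "b \<in> B"
      then obtain a where "a \<in> A" "Q a b" using ex1[OF assms(2)] by blast
      then show "b \<in> f ` A" using partner \<open>b \<in> B\<close> by blast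
    qed
  qed
  ultimately show ?thesis using that partner by (auto simp: bij_betw_def)
qed

lemma bij_betw_commute_the_inv_into:
  assumes "bij_betw f A B" "b \<in> B" "\<And>a. a \<in> A \<Longrightarrow> f (g a) = g (f a)"
  shows "g b = f (g (the_inv_into A f b))"
proof -
  obtain a where "a \<in> A" "b = f a" using assms(1,2) by (auto simp: bij_betw_def)
  moreover have "the_inv_into A f (f a) = a"
    using assms(1) \<open>a \<in> A\<close> by (simp add: bij_betw_def the_inv_into_f_f)
  ultimately show ?thesis using assms(3) by simp
qed

lemma commute_fixes_iff:
  assumes "inj_on f A" "a \<in> A" "g a \<in> A" "f (g a) = g (f a)"
  shows "g a = a \<longleftrightarrow> g (f a) = f a"
  using assms by (metis inj_onD)

locale injective_semigroup =
  fixes S :: "('a \<Rightarrow> 'a) set" and V :: "'a set"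
  assumes comp_closed: "g \<in> S \<Longrightarrow> h \<in> S \<Longrightarrow> g \<circ> h \<in> S"
    and inj_on_V: "g \<in> S \<Longrightarrow> inj_on g V"
    and maps_V: "g \<in> S \<Longrightarrow> x \<in> V \<Longrightarrow> g x \<in> V"
begin

definition orbit :: "'a \<Rightarrow> 'a set" where
  "orbit x = (\<lambda>g. g x) ` S"

definition invariant :: "('a \<Rightarrow> 'a \<Rightarrow> bool) \<Rightarrow> bool" where
  "invariant P \<longleftrightarrow> (\<forall>g\<in>S. \<forall>u\<in>V. \<forall>v\<in>V. P (g u) (g v) = P u v)"

lemma orbit_subset: "x \<in> V \<Longrightarrow> orbit x \<subseteq> V"
  unfolding orbit_def using maps_V by auto

lemma image_orbit:
  assumes "x \<in> V" "finite (orbit x)" "g \<in> S"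
  shows "g ` orbit x = orbit x"
proof -
  have "g ` orbit x \<subseteq> orbit x"
  proof
    fix z assume "z \<in> g ` orbit x"
    then obtain h where "h \<in> S" "z = (g \<circ> h) x" unfolding orbit_def by auto
    then show "z \<in> orbit x" unfolding orbit_def using comp_closed[OF assms(3)] by blast
  qed
  moreover have "card (g ` orbit x) = card (orbit x)"
    using inj_on_subset[OF inj_on_V[OF assms(3)] orbit_subset[OF assms(1)]] by (rule card_image)
  ultimately show ?thesis using card_subset_eq[OF assms(2)] by blast
qed

lemma invariant_flip: "invariant P \<Longrightarrow> invariant (\<lambda>u v. P v u)"
  unfolding invariant_def by blast

lemma invariant_eq_const: "invariant P \<Longrightarrow> invariant (\<lambda>u v. P u v = t)"
  unfolding invariant_def by blast

lemma card_related_image: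
  assumes "invariant P" "g \<in> S" "a \<in> V" "y \<in> V" "finite (orbit y)"
  shows "card {b \<in> orbit y. P (g a) b} = card {b \<in> orbit y. P a b}"
proof -
  have "{b \<in> orbit y. P (g a) b} = g ` {b \<in> orbit y. P a b}"
  proof
    show "g ` {b \<in> orbit y. P a b} \<subseteq> {b \<in> orbit y. P (g a) b}"
      using image_orbit[OF assms(4,5,2)] orbit_subset[OF assms(4)] assms(1-3)
      unfolding invariant_def by blast
    show "{b \<in> orbit y. P (g a) b} \<subseteq> g ` {b \<in> orbit y. P a b}"
    proof
      fix b assume b: "b \<in> {b \<in> orbit y. P (g a) b}"
      then obtain b' where "b' \<in> orbit y" "b = g b'"
        using image_orbit[OF assms(4,5,2)] by blast
      moreover have "P a b'"
        using b calculation orbit_subset[OF assms(4)] assms(1-3) unfolding invariant_def by auto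
      ultimately show "b \<in> g ` {b \<in> orbit y. P a b}" by blast
    qed
  qed
  moreover have "inj_on g {b \<in> orbit y. P a b}"
    by (rule inj_on_subset[OF inj_on_V[OF assms(2)]]) (use orbit_subset[OF assms(4)] in auto)
  ultimately show ?thesis by (simp add: card_image)
qed

lemma card_related_orbit:
  assumes "invariant P" "x \<in> V" "a \<in> orbit x" "y \<in> V" "finite (orbit y)"
  shows "card {b \<in> orbit y. P a b} = card {b \<in> orbit y. P x b}"
  using assms card_related_image[OF assms(1) _ assms(2,4,5)] unfolding orbit_def by auto

lemma card_related_orbit_flip:
  assumes "invariant P" "y \<in> V" "b \<in> orbit y" "x \<in> V" "finite (orbit x)"
  shows "card {a \<in> orbit x. P a b} = card {a \<in> orbit x. P a y}"
  using card_related_orbit[OF invariant_flip[OF assms(1)] assms(2-5)] by simp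

lemma card_orbit_mult_degree:
  assumes "invariant P" "x \<in> V" "y \<in> V" "finite (orbit x)" "finite (orbit y)"
  shows "card (orbit x) * card {b \<in> orbit y. P x b} = card (orbit y) * card {a \<in> orbit x. P a y}"
proof -
  have "card (orbit x) * card {b \<in> orbit y. P x b} = (\<Sum>a\<in>orbit x. card {b \<in> orbit y. P a b})"
    using card_related_orbit[OF assms(1,2) _ assms(3,5)] by simp
  also have "\<dots> = (\<Sum>b\<in>orbit y. card {a \<in> orbit x. P a b})"
    using assms(4,5) by (rule sum_card_filter_swap)
  also have "\<dots> = card (orbit y) * card {a \<in> orbit x. P a y}"
    using card_related_orbit_flip[OF assms(1,3) _ assms(2,4)] by simp
  finally show ?thesis .
qed

lemma orbit_degree_bounds:
  assumes P: "invariant P" and x: "x \<in> V" and y: "y \<in> V"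
    and fin: "finite (orbit x)" "finite (orbit y)"
    and b: "b \<in> orbit y" and a1: "a1 \<in> orbit x" "P a1 b" and a2: "a2 \<in> orbit x" "\<not> P a2 b"
  shows "0 < card {b \<in> orbit y. P x b}" "card {b \<in> orbit y. P x b} < card (orbit y)"
    and "0 < card {a \<in> orbit x. P a y}" "card {a \<in> orbit x. P a y} < card (orbit x)"
proof -
  have pos: "0 < card {z \<in> Z. Q z}" if "finite Z" "z \<in> Z" "Q z" for Z Q and z :: 'a
    using that by (auto simp: card_gt_0_iff)
  have less: "card {z \<in> Z. Q z} < card Z" if "finite Z" "z \<in> Z" "\<not> Q z" for Z Q and z :: 'a
    using that by (intro psubset_card_mono) auto
  show "0 < card {b \<in> orbit y. P x b}"
    using pos[of _ _ "P a1", OF fin(2) b a1(2)] card_related_orbit[OF P x a1(1) y fin(2)] by simp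
  show "card {b \<in> orbit y. P x b} < card (orbit y)"
    using less[of _ _ "P a2", OF fin(2) b a2(2)] card_related_orbit[OF P x a2(1) y fin(2)] by simp
  show "0 < card {a \<in> orbit x. P a y}"
    using pos[of _ _ "\<lambda>a. P a b", OF fin(1) a1] card_related_orbit_flip[OF P y b x fin(1)] by simp
  show "card {a \<in> orbit x. P a y} < card (orbit x)"
    using less[of _ _ "\<lambda>a. P a b", OF fin(1) a2] card_related_orbit_flip[OF P y b x fin(1)] by simp
qed

lemma equivariant_matching:
  assumes Q: "invariant Q" and x: "x \<in> V" and y: "y \<in> V"
    and fin: "finite (orbit x)" "finite (orbit y)"
    and "card {b \<in> orbit y. Q x b} = 1" "card {a \<in> orbit x. Q a y} = 1"
  obtains f where "bij_betw f (orbit x) (orbit y)"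
    "\<And>g a. g \<in> S \<Longrightarrow> a \<in> orbit x \<Longrightarrow> f (g a) = g (f a)"
proof -
  have "card {b \<in> orbit y. Q a b} = 1" if "a \<in> orbit x" for a
    using card_related_orbit[OF Q x that y fin(2)] assms(6) by simp
  moreover have "card {a \<in> orbit x. Q a b} = 1" if "b \<in> orbit y" for b
    using card_related_orbit_flip[OF Q y that x fin(1)] assms(7) by simp
  ultimately obtain f where f: "bij_betw f (orbit x) (orbit y)"
    and partner: "\<And>a b. a \<in> orbit x \<Longrightarrow> b \<in> orbit y \<Longrightarrow> Q a b \<longleftrightarrow> b = f a"
    using bij_betw_of_unique_partners by blast
  have "f (g a) = g (f a)" if g: "g \<in> S" and a: "a \<in> orbit x" for g a
  proof -
    have fa: "f a \<in> orbit y" using f a by (auto simp: bij_betw_def)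
    have "g a \<in> orbit x" "g (f a) \<in> orbit y"
      using image_orbit[OF x fin(1) g] image_orbit[OF y fin(2) g] a fa by blast+
    moreover have "Q (g a) (g (f a))"
      using Q g a fa partner[OF a fa] orbit_subset[OF x] orbit_subset[OF y]
      unfolding invariant_def by (metis subsetD)
    ultimately show ?thesis using partner by simp
  qed
  with f that show ?thesis by blast
qed

lemma equivariant_bij_betw_orbits:
  assumes P: "invariant P" and x: "x \<in> V" and y: "y \<in> V"
    and fin: "finite (orbit x)" "finite (orbit y)"
    and card: "card (orbit x) \<le> 3" "card (orbit y) \<le> 3"
    and b: "b \<in> orbit y" and a1: "a1 \<in> orbit x" "P a1 b" and a2: "a2 \<in> orbit x" "\<not> P a2 b"
  obtains f where "bij_betw f (orbit x) (orbit y)"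
    "\<And>g a. g \<in> S \<Longrightarrow> a \<in> orbit x \<Longrightarrow> f (g a) = g (f a)"
proof -
  define kA where "kA = card {b \<in> orbit y. P x b}"
  define kB where "kB = card {a \<in> orbit x. P a y}"
  have k: "card (orbit x) = card (orbit y)" "kA = kB" "kA = 1 \<or> kA + 1 = card (orbit y)"
    using biregular_degrees_le_3[OF card_orbit_mult_degree[OF P x y fin]
        orbit_degree_bounds[OF P x y fin b a1 a2] card]
    unfolding kA_def kB_def by auto
  \<comment> \<open>The matching consists of the edges if \<open>kA = 1\<close> and of the non-edges if \<open>kA + 1 = |B|\<close>.\<close>
  have degree_1: "card {z \<in> Z. P' z = (kA = 1)} = 1"
    if "finite Z" "card {z \<in> Z. P' z} = kA" "card Z = card (orbit y)" for Z and P' :: "'a \<Rightarrow> bool"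
  proof (cases "kA = 1")
    case False
    have "{z \<in> Z. P' z = (kA = 1)} = Z - {z \<in> Z. P' z}" using False by auto
    then show ?thesis
      using that False k(3) by (simp add: card_Diff_subset)
  qed (use that in simp)
  have "card {b \<in> orbit y. (P x b) = (kA = 1)} = 1"
    using degree_1[OF fin(2)] kA_def by simp
  moreover have "card {a \<in> orbit x. (P a y) = (kA = 1)} = 1"
    using degree_1[OF fin(1)] kB_def k(1,2) by simp
  ultimately show ?thesis
    by (rule equivariant_matching[OF invariant_eq_const[OF P] x y fin]) (rule that)
qed

lemma uncommon_neighbour_orbit_converse:
  assumes P: "invariant P" and x: "x \<in> V" and y: "y \<in> V"
    and fin: "finite (orbit x)" "finite (orbit y)"
    and b: "b \<in> orbit y" and a1: "a1 \<in> orbit x" "P a1 b" and a2: "a2 \<in> orbit x" "\<not> P a2 b"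
    and a: "a \<in> orbit x"
  shows "(\<exists>b\<in>orbit y. P a b) \<and> \<not> (\<forall>b\<in>orbit y. P a b)"
proof -
  note degree = card_related_orbit[OF P x a y fin(2)]
  note bounds = orbit_degree_bounds[OF P x y fin b a1 a2]
  have "{b \<in> orbit y. P a b} \<noteq> {}" using degree bounds(1) by (metis card_gt_0_iff)
  moreover have "{b \<in> orbit y. P a b} \<noteq> orbit y" using degree bounds(2) by auto
  ultimately show ?thesis by blast
qed

end


lemma injective_semigroup_stab:
  assumes "domain_preserving V E R c"
  shows "injective_semigroup (stab V E R c) V"
proof
  fix g h assume g: "g \<in> stab V E R c" and h: "h \<in> stab V E R c"
  then have aut: "g \<in> aut V E R" "h \<in> aut V E R" and pres: "preserves g c" "preserves h c"
    unfolding stab_def by auto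
  have hV: "h u \<in> V" if "u \<in> V" for u
    using aut(2) that unfolding aut_def bij_betw_def by blast
  have "E u v \<longleftrightarrow> E (g (h u)) (g (h v))" if "u \<in> V" "v \<in> V" for u v
  proof -
    have "E u v \<longleftrightarrow> E (h u) (h v)" using aut(2) that unfolding aut_def by blast
    also have "\<dots> \<longleftrightarrow> E (g (h u)) (g (h v))" using aut(1) hV that unfolding aut_def by blast
    finally show ?thesis .
  qed
  moreover have "bij_betw (g \<circ> h) V V"
    using aut bij_betw_trans[of h V V g] unfolding aut_def by blast
  ultimately have "g \<circ> h \<in> aut V E R"
    using aut unfolding aut_def by auto
  moreover have "preserves (g \<circ> h) c"
    unfolding preserves_def
  proof (intro allI impI)
    fix v assume v: "v \<in> dom c \<and> (g \<circ> h) v \<in> dom c"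
    have "h v \<in> dom c" using assms h v unfolding domain_preserving_def by blast
    then show "c v = c ((g \<circ> h) v)" using pres v unfolding preserves_def by auto
  qed
  ultimately show "g \<circ> h \<in> stab V E R c" unfolding stab_def by blast
next
  fix g x assume "g \<in> stab V E R c"
  then show "inj_on g V" and "x \<in> V \<Longrightarrow> g x \<in> V"
    unfolding stab_def aut_def bij_betw_def by auto
qed

lemma stab_maps_non_roots:
  assumes "g \<in> stab V E R c" "R \<subseteq> V" "x \<in> V - R"
  shows "g x \<in> V - R"
proof -
  have g: "bij_betw g V V" "\<forall>r\<in>R. g r = r" using assms(1) unfolding stab_def aut_def by auto
  have "g x \<notin> R"
  proof
    assume "g x \<in> R"
    then have "g (g x) = g x" using g(2) by blast
    then have "g x = x" using g(1) assms(2,3) \<open>g x \<in> R\<close> by (auto simp: bij_betw_def inj_on_def)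
    then show False using assms(3) \<open>g x \<in> R\<close> by simp
  qed
  then show ?thesis using g(1) assms(3) by (auto simp: bij_betw_def)
qed

theorem lemma3p1:
  fixes V :: "'a set" and E :: "'a \<Rightarrow> 'a \<Rightarrow> bool" and R :: "'a set"
    and c :: "'a \<Rightarrow> 'c option" and A B :: "'a set"
  assumes "multirooted_graph V E R"
    and "partial_colouring V c"
    and "domain_preserving V E R c"
    and "moving_tuple V E R c A" and "finite A" and "card A \<le> 3"
    and "moving_tuple V E R c B" and "finite B" and "card B \<le> 3"
    and "\<exists>w\<in>B. uncommon_neighbour V E R A w"
  shows "(\<exists>w\<in>A. uncommon_neighbour V E R B w) \<and>
         (\<exists>f. bij_betw f A B \<and>
              (\<forall>\<gamma>\<in>stab V E R c. \<forall>b\<in>B. \<gamma> b = f (\<gamma> (the_inv_into A f b))) \<and>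
              (\<forall>\<gamma>\<in>stab V E R c. \<forall>v\<in>A. \<gamma> v = v \<longleftrightarrow> \<gamma> (f v) = f v))"
proof -
  interpret \<Gamma>: injective_semigroup "stab V E R c" V
    using assms(3) by (rule injective_semigroup_stab)
  have sym: "\<And>u v. E u v \<Longrightarrow> E v u" and roots: "R \<subseteq> V"
    using assms(1) unfolding multirooted_graph_def simple_graph_def by auto
  obtain x y where x: "x \<in> V - R" "A = \<Gamma>.orbit x" and y: "y \<in> V - R" "B = \<Gamma>.orbit y"
    using assms(4,7) unfolding moving_tuple_def charted_def \<Gamma>.orbit_def by blast
  obtain b a1 a2 where b: "b \<in> \<Gamma>.orbit y"
    and a1: "a1 \<in> \<Gamma>.orbit x" "E a1 b" and a2: "a2 \<in> \<Gamma>.orbit x" "\<not> E a2 b"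
    using assms(10) sym unfolding uncommon_neighbour_def x(2) y(2) by blast
  have adjacency: "\<Gamma>.invariant E"
    unfolding \<Gamma>.invariant_def by (auto simp: stab_def aut_def)
  note orbits = adjacency x(1)[THEN DiffD1] y(1)[THEN DiffD1] assms(5,8)[unfolded x(2) y(2)]
  obtain f where f: "bij_betw f A B"
    and commute: "\<And>g a. g \<in> stab V E R c \<Longrightarrow> a \<in> A \<Longrightarrow> f (g a) = g (f a)"
    using \<Gamma>.equivariant_bij_betw_orbits[OF orbits assms(6,9)[unfolded x(2) y(2)] b a1 a2]
    unfolding x(2) y(2) by blast
  obtain g where "g \<in> stab V E R c" "a1 = g x" using a1(1) unfolding \<Gamma>.orbit_def by blast
  then have "a1 \<in> V - R" using stab_maps_non_roots[OF _ roots x(1)] by blast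
  then have "uncommon_neighbour V E R B a1"
    using \<Gamma>.uncommon_neighbour_orbit_converse[OF orbits b a1 a2 a1(1)]
    unfolding uncommon_neighbour_def y(2) by blast
  moreover have "\<forall>g\<in>stab V E R c. \<forall>b\<in>B. g b = f (g (the_inv_into A f b))"
    using bij_betw_commute_the_inv_into[OF f] commute by blast
  moreover have "\<forall>g\<in>stab V E R c. \<forall>a\<in>A. g a = a \<longleftrightarrow> g (f a) = f a"
  proof (intro ballI)
    fix g a assume g: "g \<in> stab V E R c" and a: "a \<in> A"
    have "g a \<in> A"
      using \<Gamma>.image_orbit[OF x(1)[THEN DiffD1] _ g] assms(5) a x(2) by blast
    then show "g a = a \<longleftrightarrow> g (f a) = f a"
      using commute_fixes_iff[OF bij_betw_imp_inj_on[OF f] a] commute[OF g a] by blast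
  qed
  ultimately show ?thesis using a1(1) f unfolding x(2) by blast
qed

end
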